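(* Let $m\geq 3$ be an integer and let $A$ be a multiset of points in $\mathbb{Z}^2$ with $|A|\geq 4m-3$ (counting multiplicities). If $\boldsymbol{p}\in\mathbb{R}^2$ is a point with $\boldsymbol{p}\notin A$ that has half-space depth $m$ with respect to $A$, then $A$ can be partitioned into $m$ submultisets $A_1,\dots,A_m$ with $\boldsymbol{p}\in\conv(A_i)$ for every $i$.
   Context: A point $\boldsymbol{p}$ has half-space depth $t$ with respect to a multiset $A$ if every closed half-plane containing $\boldsymbol{p}$ contains at least $t$ points of $A$, counted with multiplicity. A partition of a multiset into submultisets means the multiplicities of each element in the parts sum to its multiplicity in the multiset. *)

theory Defs
  imports "HOL-Analysis.Analysis" "HOL-Library.Multiset"
begin

definition lattice_pt :: "int \<times> int \<Rightarrow> real \<times> real" where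
  "lattice_pt q = (real_of_int (fst q), real_of_int (snd q))"

definition closed_halfplane :: "real \<times> real \<Rightarrow> real \<Rightarrow> (real \<times> real) set" where
  "closed_halfplane a b = {x. a \<bullet> x \<le> b}"

definition has_halfspace_depth ::
  "real \<times> real \<Rightarrow> (int \<times> int) multiset \<Rightarrow> nat \<Rightarrow> bool" where
  "has_halfspace_depth p A t \<longleftrightarrow>
     (\<forall>a b. a \<noteq> 0 \<longrightarrow> p \<in> closed_halfplane a b \<longrightarrow>
        t \<le> size (filter_mset (\<lambda>q. lattice_pt q \<in> closed_halfplane a b) A))"

end

theory Submission
  imports Defs
begin

(* Number the points q_0, ..., q_(n-1) of A by increasing angle around p and continue their
  angles to a nondecreasing sequence x_k on all of \<nat> with x_(k+n) = x_k + 2 pi. Depth m forces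
  x_(k+m) - x_k \<le> pi: otherwise the closed half-plane through p facing the midpoint of that arc
  would only contain the m - 1 points strictly inside it. From this, a greedy choice of two
  shifts a, b \<ge> m with a + b + m \<le> n makes each triple t, t + a, t + a + b (t < m) go around p
  in steps of at most pi, so p lies in the triangle it spans. *)

definition dir :: "real \<Rightarrow> real \<times> real" where
  "dir \<theta> = (cos \<theta>, sin \<theta>)"

definition angle_at :: "real \<times> real \<Rightarrow> real \<times> real \<Rightarrow> real" where
  "angle_at p q = Arg (Complex (fst (q - p)) (snd (q - p)))"

lemma angle_at_bounded: "- pi < angle_at p q \<and> angle_at p q \<le> pi"
  unfolding angle_at_def by (rule Arg_bounded)

lemma polar_form: "q = p + norm (q - p) *\<^sub>R dir (angle_at p q)"
proof -
  define z where "z = Complex (fst (q - p)) (snd (q - p))"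
  have "norm (q - p) = cmod z"
    by (cases p, cases q) (simp add: z_def norm_Pair cmod_def)
  moreover have "Re z = cmod z * cos (Arg z)" "Im z = cmod z * sin (Arg z)"
    using rcis_cmod_Arg[of z] Re_rcis Im_rcis by metis+
  ultimately show ?thesis
    by (simp add: angle_at_def dir_def prod_eq_iff flip: z_def) (simp add: z_def)
qed

lemma dir_add_multiple_2pi: "dir (\<theta> + 2 * pi * of_int k) = dir \<theta>"
  by (simp add: dir_def cos_add sin_add)

lemma dir_add_pi: "dir (\<theta> + pi) = - dir \<theta>"
  by (simp add: dir_def)

lemma inner_dir: "dir \<alpha> \<bullet> dir \<beta> = cos (\<alpha> - \<beta>)"
  by (simp add: dir_def cos_diff)

lemma dir_neq_zero: "dir \<theta> \<noteq> 0"
  using inner_dir[of \<theta> \<theta>] by auto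

lemma convex_hull_opposite_rays:
  fixes p u :: "'a::real_vector"
  assumes "r > 0" "r' > 0"
  shows "p \<in> convex hull {p + r *\<^sub>R u, p - r' *\<^sub>R u}"
proof -
  have "p = (r' / (r + r')) *\<^sub>R (p + r *\<^sub>R u) + (r / (r + r')) *\<^sub>R (p - r' *\<^sub>R u)"
    using assms by (simp add: algebra_simps flip: scaleR_add_left add_divide_distrib)
  moreover have "r' / (r + r') + r / (r + r') = 1"
    using assms by (simp flip: add_divide_distrib)
  ultimately show ?thesis
    using assms unfolding convex_hull_2 by (intro CollectI exI[of _ "r' / (r + r')"] exI[of _ "r / (r + r')"]) auto
qed

lemma in_convex_hull_3_if_balanced:
  fixes p a b c :: "'a::real_vector"
  assumes "u \<ge> 0" "v \<ge> 0" "w \<ge> 0" "u + v + w > 0"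
    and "u *\<^sub>R (a - p) + v *\<^sub>R (b - p) + w *\<^sub>R (c - p) = 0"
  shows "p \<in> convex hull {a, b, c}"
proof -
  define S where "S = u + v + w"
  have "u *\<^sub>R a + v *\<^sub>R b + w *\<^sub>R c = S *\<^sub>R p"
    using assms(5) by (simp add: S_def algebra_simps)
  then have "(1 / S) *\<^sub>R (u *\<^sub>R a + v *\<^sub>R b + w *\<^sub>R c) = p"
    using assms(4) by (simp add: S_def)
  then have "p = (u / S) *\<^sub>R a + (v / S) *\<^sub>R b + (w / S) *\<^sub>R c"
    by (simp add: scaleR_add_right)
  moreover have "u / S + v / S + w / S = 1"
    using assms(4) by (simp add: S_def flip: add_divide_distrib)
  ultimately show ?thesis
    using assms(1-4) unfolding convex_hull_3 S_def by (intro CollectI exI) auto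
qed

lemma sine_weighted_dir_sum:
  "sin (\<gamma> - \<beta>) *\<^sub>R dir \<alpha> + sin (\<alpha> - \<gamma>) *\<^sub>R dir \<beta> + sin (\<beta> - \<alpha>) *\<^sub>R dir \<gamma> = 0"
  by (simp add: dir_def sin_diff algebra_simps zero_prod_def)

lemma convex_hull_three_directions:
  assumes r: "r1 > 0" "r2 > 0" "r3 > 0"
    and ord: "\<alpha> \<le> \<beta>" "\<beta> \<le> \<gamma>"
    and arcs: "\<beta> - \<alpha> \<le> pi" "\<gamma> - \<beta> \<le> pi" "pi \<le> \<gamma> - \<alpha>"
  shows "p \<in> convex hull {p + r1 *\<^sub>R dir \<alpha>, p + r2 *\<^sub>R dir \<beta>, p + r3 *\<^sub>R dir \<gamma>}"
    (is "p \<in> convex hull {?a, ?b, ?c}")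
proof (cases "sin (\<beta> - \<alpha>) = 0")
  case True
  then have "\<beta> = \<alpha> \<or> \<beta> = \<alpha> + pi"
    using sin_gt_zero[of "\<beta> - \<alpha>"] ord arcs by force
  then show ?thesis
  proof
    assume "\<beta> = \<alpha>"
    then have "\<gamma> = \<alpha> + pi"
      using arcs by simp
    then have "?c = p - r3 *\<^sub>R dir \<alpha>"
      by (simp add: dir_add_pi)
    then have "p \<in> convex hull {?a, ?c}"
      using convex_hull_opposite_rays[OF r(1,3)] by simp
    then show ?thesis by (rule rev_subsetD[OF _ hull_mono]) auto
  next
    assume "\<beta> = \<alpha> + pi"
    then have "?b = p - r2 *\<^sub>R dir \<alpha>"
      by (simp add: dir_add_pi)
    then have "p \<in> convex hull {?a, ?b}"
      using convex_hull_opposite_rays[OF r(1,2)] by simp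
    then show ?thesis by (rule rev_subsetD[OF _ hull_mono]) auto
  qed
next
  case False
  have "sin (\<gamma> - \<beta>) \<ge> 0" "sin (\<beta> - \<alpha>) \<ge> 0"
    using ord arcs by (auto intro: sin_ge_zero)
  moreover have "sin (\<alpha> - \<gamma>) \<ge> 0"
    using sin_ge_zero[of "\<alpha> + 2 * pi - \<gamma>"] ord arcs by (simp add: diff_add_eq[symmetric])
  ultimately show ?thesis
    using False r sine_weighted_dir_sum[of \<gamma> \<beta> \<alpha>]
    by (intro in_convex_hull_3_if_balanced[where u = "sin (\<gamma> - \<beta>) / r1"
          and v = "sin (\<alpha> - \<gamma>) / r2" and w = "sin (\<beta> - \<alpha>) / r3"])
      (auto intro!: add_nonneg_pos)
qed

lemma cos_nonneg_imp_shift_to_right_half: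
  fixes y :: real
  assumes "cos y \<ge> 0"
  obtains s :: int where "\<bar>y + 2 * pi * of_int s\<bar> \<le> pi / 2"
proof -
  define s where "s = \<lceil>(- (pi / 2) - y) / (2 * pi)\<rceil>"
  define y' where "y' = y + 2 * pi * of_int s"
  have "(- (pi / 2) - y) / (2 * pi) \<le> s" "s < (- (pi / 2) - y) / (2 * pi) + 1"
    unfolding s_def by linarith+
  then have lo: "- (pi / 2) \<le> y'" and hi: "y' < 3 * pi / 2"
    unfolding y'_def using pi_gt_zero by (simp_all add: field_simps)
  have "cos y' = cos y"
    by (simp add: y'_def cos_add)
  then have "y' \<le> pi / 2"
    using cos_lt_zero_pi[of y'] hi assms by linarith
  with lo show thesis
    unfolding y'_def abs_le_iff by (intro that[of s]) linarith
qed

definition lifted_angle :: "real \<times> real \<Rightarrow> (real \<times> real) list \<Rightarrow> nat \<Rightarrow> real" where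
  "lifted_angle p Q k = angle_at p (Q ! (k mod length Q)) + 2 * pi * real (k div length Q)"

lemma lifted_angle_mono:
  assumes "Q \<noteq> []" "sorted (map (angle_at p) Q)"
  shows "mono (lifted_angle p Q)"
proof (rule mono_iff_le_Suc[THEN iffD2], intro allI)
  fix k
  define n where "n = length Q"
  have n: "n > 0" "k mod n < n"
    using assms(1) by (simp_all add: n_def)
  show "lifted_angle p Q k \<le> lifted_angle p Q (Suc k)"
  proof (cases "Suc (k mod n) = n")
    case True
    then have "Suc k mod n = 0" "Suc k div n = Suc (k div n)"
      by (simp_all add: mod_Suc div_Suc)
    then show ?thesis
      using angle_at_bounded[of p "Q ! (k mod n)"] angle_at_bounded[of p "Q ! 0"]
      by (simp add: lifted_angle_def algebra_simps flip: n_def)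
  next
    case False
    then have "Suc k mod n = Suc (k mod n)" "Suc k div n = k div n" "Suc (k mod n) < n"
      using n by (simp_all add: mod_Suc div_Suc)
    moreover have "map (angle_at p) Q ! (k mod n) \<le> map (angle_at p) Q ! Suc (k mod n)"
      using assms(2) \<open>Suc (k mod n) < n\<close> by (intro sorted_nth_mono) (auto simp: n_def)
    ultimately show ?thesis
      by (simp add: lifted_angle_def n_def)
  qed
qed

lemma lifted_angle_add_length:
  assumes "Q \<noteq> []"
  shows "lifted_angle p Q (k + length Q) = lifted_angle p Q k + 2 * pi"
  using assms by (simp add: lifted_angle_def algebra_simps)

lemma lifted_angle_polar_form:
  "Q ! (k mod length Q) = p + norm (Q ! (k mod length Q) - p) *\<^sub>R dir (lifted_angle p Q k)"
  using polar_form dir_add_multiple_2pi[of _ "int (k div length Q)"]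
  by (simp add: lifted_angle_def)

lemma lifted_angle_attained_between:
  assumes "Q \<noteq> []" "sorted (map (angle_at p) Q)" "j < length Q"
    and "lifted_angle p Q k < angle_at p (Q ! j) + 2 * pi * of_int s"
    and "angle_at p (Q ! j) + 2 * pi * of_int s < lifted_angle p Q l"
  shows "\<exists>i. k < i \<and> i < l \<and> i mod length Q = j"
proof -
  define n where "n = length Q"
  have "lifted_angle p Q 0 \<le> lifted_angle p Q k"
    using lifted_angle_mono[OF assms(1,2)] by (simp add: monoD)
  moreover have "- pi < lifted_angle p Q 0"
    using angle_at_bounded by (simp add: lifted_angle_def)
  ultimately have "- 2 * pi < 2 * pi * of_int s"
    using assms(4) angle_at_bounded[of p "Q ! j"] by linarith
  then have "- 1 < real_of_int s"
    using mult_less_cancel_left_pos[of "2 * pi" "- 1" "of_int s"] by simp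
  then have "s \<ge> 0"
    by linarith
  define i where "i = j + n * nat s"
  have i: "i mod n = j" "i div n = nat s"
    using assms(1,3) by (simp_all add: i_def n_def div_add1_eq)
  then have "lifted_angle p Q i = angle_at p (Q ! j) + 2 * pi * of_int s"
    using \<open>s \<ge> 0\<close> by (simp add: lifted_angle_def flip: n_def)
  then have "k < i" "i < l"
    using assms(4,5) monoD[OF lifted_angle_mono[OF assms(1,2)], of i k]
      monoD[OF lifted_angle_mono[OF assms(1,2)], of l i]
    by (auto simp: not_less[symmetric])
  with i show ?thesis
    by (auto simp: n_def)
qed

lemma lifted_angle_arc_le_pi:
  assumes Q: "Q \<noteq> []" "sorted (map (angle_at p) Q)" "p \<notin> set Q" and "m \<ge> 1"
    and depth: "\<And>a b. a \<noteq> 0 \<Longrightarrow> p \<in> closed_halfplane a b \<Longrightarrow>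
      m \<le> length (filter (\<lambda>q. q \<in> closed_halfplane a b) Q)"
  shows "lifted_angle p Q (k + m) - lifted_angle p Q k \<le> pi"
proof (rule ccontr)
  define n where "n = length Q"
  define x where "x = lifted_angle p Q"
  assume "\<not> x (k + m) - x k \<le> pi"
  define \<mu> where "\<mu> = (x k + x (k + m)) / 2"
  define H where "H = closed_halfplane (- dir \<mu>) (- dir \<mu> \<bullet> p)"
  have "- dir \<mu> \<noteq> 0"
    using dir_neq_zero by simp
  then have "m \<le> length (filter (\<lambda>q. q \<in> H) Q)"
    unfolding H_def by (rule depth) (simp add: closed_halfplane_def)
  also have "\<dots> = card {j. j < n \<and> Q ! j \<in> H}"
    by (simp add: length_filter_conv_card n_def)
  also have "\<dots> \<le> card ((\<lambda>i. i mod n) ` {k<..<k + m})"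
  proof (intro card_mono subsetI)
    fix j
    assume "j \<in> {j. j < n \<and> Q ! j \<in> H}"
    then have j: "j < n" "Q ! j \<in> H"
      by auto
    define \<theta> where "\<theta> = angle_at p (Q ! j)"
    define r where "r = norm (Q ! j - p)"
    have "r > 0"
      using j(1) Q(3) nth_mem[of j Q] by (auto simp: r_def n_def)
    have "Q ! j = p + r *\<^sub>R dir \<theta>"
      unfolding r_def \<theta>_def by (rule polar_form)
    then have "r * cos (\<mu> - \<theta>) \<ge> 0"
      using j(2) by (simp add: H_def closed_halfplane_def inner_add_right inner_dir)
    then have "cos (\<theta> - \<mu>) \<ge> 0"
      using \<open>r > 0\<close> cos_minus[of "\<theta> - \<mu>"] by (simp add: zero_le_mult_iff)
    then obtain s :: int where "\<bar>\<theta> - \<mu> + 2 * pi * of_int s\<bar> \<le> pi / 2"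
      by (rule cos_nonneg_imp_shift_to_right_half)
    then have "x k < \<theta> + 2 * pi * of_int s" "\<theta> + 2 * pi * of_int s < x (k + m)"
      using \<open>\<not> x (k + m) - x k \<le> pi\<close> unfolding \<mu>_def abs_le_iff
      by (simp_all add: field_simps)
    then show "j \<in> (\<lambda>i. i mod n) ` {k<..<k + m}"
      using lifted_angle_attained_between[OF Q(1,2), of j k s "k + m"] j(1)
      by (auto simp: x_def \<theta>_def n_def)
  qed simp
  also have "\<dots> \<le> card {k<..<k + m}"
    by (rule card_image_le) simp
  finally show False
    using \<open>m \<ge> 1\<close> by simp
qed

lemma mono_periodic_third_arc_le_pi:
  fixes x :: "nat \<Rightarrow> real"
  assumes mono: "mono x" and per: "\<And>k. x (k + n) = x k + 2 * pi"
    and "m \<le> a" "m \<le> b" "a + b + m < n"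
    and t0: "t0 < m" "x (t0 + a + 1) - x t0 > pi"
    and t1: "t1 < m" "x (t1 + a + b + 1) - x (t1 + a) > pi"
    and "t < m"
  shows "x (t + n) - x (t + a + b) \<le> pi"
proof -
  have "t1 \<le> t0"
  proof (rule ccontr)
    assume "\<not> t1 \<le> t0"
    then have "x (t0 + a + 1) \<le> x (t1 + a)" "x (t1 + a + b + 1) \<le> x (t0 + n)"
      using t1(1) \<open>a + b + m < n\<close> by (auto intro: monoD[OF mono])
    then show False
      using t0(2) t1(2) per[of t0] by linarith
  qed
  show ?thesis
  proof (cases "t \<le> t0")
    case True
    then have "x t \<le> x t0" "x (t0 + a + 1) \<le> x (t + a + b)"
      using t0(1) \<open>m \<le> b\<close> by (auto intro: monoD[OF mono])
    then show ?thesis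
      using t0(2) per[of t] per[of t0] monoD[OF mono, of t t0] True by linarith
  next
    case False
    then have "x t \<le> x (t1 + a)" "x (t1 + a + b + 1) \<le> x (t + a + b)"
      using \<open>t1 \<le> t0\<close> \<open>t < m\<close> \<open>m \<le> a\<close> by (auto intro: monoD[OF mono])
    then show ?thesis
      using t1(2) per[of t] by linarith
  qed
qed

lemma mono_periodic_three_short_arcs:
  fixes x :: "nat \<Rightarrow> real"
  assumes mono: "mono x" and per: "\<And>k. x (k + n) = x k + 2 * pi"
    and short: "\<And>k. x (k + m) - x k \<le> pi" and "3 * m \<le> n"
  obtains a b where "m \<le> a" "m \<le> b" "a + b + m \<le> n"
    "\<And>t. t < m \<Longrightarrow> x (t + a) - x t \<le> pi"
    "\<And>t. t < m \<Longrightarrow> x (t + a + b) - x (t + a) \<le> pi"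
    "\<And>t. t < m \<Longrightarrow> x (t + n) - x (t + a + b) \<le> pi"
proof -
  define A where "A a \<longleftrightarrow> m \<le> a \<and> a + 2 * m \<le> n \<and> (\<forall>t<m. x (t + a) - x t \<le> pi)" for a
  define a where "a = Greatest A"
  have "A m"
    using short \<open>3 * m \<le> n\<close> by (auto simp: A_def)
  then have "A a" and a_max: "\<And>a'. A a' \<Longrightarrow> a' \<le> a"
    unfolding a_def using GreatestI_nat[of A m n] Greatest_le_nat[of A _ n] by (auto simp: A_def)
  define B where "B b \<longleftrightarrow> m \<le> b \<and> a + b + m \<le> n \<and> (\<forall>t<m. x (t + a + b) - x (t + a) \<le> pi)" for b
  define b where "b = Greatest B"
  have "B m"
    using short[of "_ + a"] \<open>A a\<close> by (auto simp: A_def B_def add.assoc)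
  then have "B b" and b_max: "\<And>b'. B b' \<Longrightarrow> b' \<le> b"
    unfolding b_def using GreatestI_nat[of B m n] Greatest_le_nat[of B _ n] by (auto simp: B_def)
  have "x (t + n) - x (t + a + b) \<le> pi" if "t < m" for t
  proof (cases "a + b + m = n")
    case True
    then show ?thesis
      using short[of "t + a + b"] by (simp add: add.assoc)
  next
    case False
    with \<open>A a\<close> \<open>B b\<close> have ab: "m \<le> a" "m \<le> b" "a + b + m < n"
      by (auto simp: A_def B_def)
    obtain t0 where t0: "t0 < m" "x (t0 + a + 1) - x t0 > pi"
      using a_max[of "a + 1"] ab by (fastforce simp: A_def add.assoc)
    obtain t1 where t1: "t1 < m" "x (t1 + a + b + 1) - x (t1 + a) > pi"
      using b_max[of "b + 1"] ab by (fastforce simp: B_def add.assoc)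
    show ?thesis
      using mono_periodic_third_arc_le_pi[OF mono per ab t0 t1 \<open>t < m\<close>] .
  qed
  with \<open>A a\<close> \<open>B b\<close> show thesis
    by (intro that[of a b]) (auto simp: A_def B_def)
qed

lemma angular_partition:
  assumes Q: "sorted (map (angle_at p) Q)" "p \<notin> set Q" and "m \<ge> 1" "3 * m \<le> length Q"
    and depth: "\<And>a b. a \<noteq> 0 \<Longrightarrow> p \<in> closed_halfplane a b \<Longrightarrow>
      m \<le> length (filter (\<lambda>q. q \<in> closed_halfplane a b) Q)"
  obtains c :: "nat \<Rightarrow> nat" where "\<And>j. c j < m"
    "\<And>t. t < m \<Longrightarrow> p \<in> convex hull ((!) Q ` {j. j < length Q \<and> c j = t})"
proof -
  define n where "n = length Q"
  define x where "x = lifted_angle p Q"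
  have "Q \<noteq> []"
    using assms(3,4) by auto
  have mono: "mono x"
    unfolding x_def using \<open>Q \<noteq> []\<close> Q(1) by (rule lifted_angle_mono)
  have per: "x (k + n) = x k + 2 * pi" for k
    unfolding x_def n_def using \<open>Q \<noteq> []\<close> by (rule lifted_angle_add_length)
  have short: "x (k + m) - x k \<le> pi" for k
    unfolding x_def using \<open>Q \<noteq> []\<close> Q \<open>m \<ge> 1\<close> depth by (rule lifted_angle_arc_le_pi)
  obtain a b where ab: "m \<le> a" "m \<le> b" "a + b + m \<le> n"
    and arcs: "\<And>t. t < m \<Longrightarrow> x (t + a) - x t \<le> pi"
      "\<And>t. t < m \<Longrightarrow> x (t + a + b) - x (t + a) \<le> pi"
      "\<And>t. t < m \<Longrightarrow> x (t + n) - x (t + a + b) \<le> pi"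
    using mono_periodic_three_short_arcs[of x n m, OF mono per short] assms(4) n_def by blast
  define c where "c j = (if j < m then j else if a \<le> j \<and> j < a + m then j - a
    else if a + b \<le> j \<and> j < a + b + m then j - a - b else 0)" for j
  define r where "r i = norm (Q ! i - p)" for i
  have polar: "Q ! i = p + r i *\<^sub>R dir (x i)" "r i > 0" if "i < n" for i
    using that lifted_angle_polar_form[of Q i p] nth_mem[of i Q] Q(2) by (auto simp: x_def n_def r_def)
  show thesis
  proof (rule that)
    show "c j < m" for j
      using \<open>m \<ge> 1\<close> by (auto simp: c_def)
  next
    fix t
    assume "t < m"
    let ?S = "{Q ! t, Q ! (t + a), Q ! (t + a + b)}"
    have "?S \<subseteq> (!) Q ` {j. j < n \<and> c j = t}"
      using \<open>t < m\<close> ab by (auto simp: c_def)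
    moreover have "p \<in> convex hull ?S"
    proof -
      have idx: "t < n" "t + a < n" "t + a + b < n"
        using \<open>t < m\<close> ab by linarith+
      have "p \<in> convex hull
          {p + r t *\<^sub>R dir (x t), p + r (t + a) *\<^sub>R dir (x (t + a)), p + r (t + a + b) *\<^sub>R dir (x (t + a + b))}"
        using arcs[OF \<open>t < m\<close>] per[of t] idx polar(2)
        by (intro convex_hull_three_directions monoD[OF mono]) auto
      with idx show ?thesis
        by (simp add: polar(1))
    qed
    ultimately show "p \<in> convex hull ((!) Q ` {j. j < length Q \<and> c j = t})"
      by (metis hull_mono n_def subsetD)
  qed
qed

lemma sum_image_filter_mset_classes:
  fixes m :: nat
  shows "(\<Sum>i<m. image_mset f (filter_mset (\<lambda>j. c j = i) M)) = image_mset f (filter_mset (\<lambda>j. c j < m) M)"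
proof (induction m)
  case (Suc m)
  have "filter_mset (\<lambda>j. c j < Suc m) M = filter_mset (\<lambda>j. c j < m) M + filter_mset (\<lambda>j. c j = m) M"
    by (auto simp: multiset_eq_iff less_Suc_eq)
  with Suc show ?case
    by simp
qed simp

lemma has_halfspace_depth_imp_length_filter:
  assumes "has_halfspace_depth p (mset L) t" "a \<noteq> 0" "p \<in> closed_halfplane a b"
  shows "t \<le> length (filter (\<lambda>q. q \<in> closed_halfplane a b) (map lattice_pt L))"
proof -
  have "t \<le> size (filter_mset (\<lambda>q. lattice_pt q \<in> closed_halfplane a b) (mset L))"
    using assms unfolding has_halfspace_depth_def by blast
  then show ?thesis
    by (simp add: filter_map comp_def flip: mset_filter)
qed

theorem lemma2:
  fixes m :: nat and A :: "(int \<times> int) multiset" and p :: "real \<times> real"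
  assumes "m \<ge> 3"
    and "size A \<ge> 4 * m - 3"
    and "p \<notin> lattice_pt ` set_mset A"
    and "has_halfspace_depth p A m"
  shows "\<exists>B :: nat \<Rightarrow> (int \<times> int) multiset.
           (\<Sum>i<m. B i) = A \<and>
           (\<forall>i<m. p \<in> convex hull (lattice_pt ` set_mset (B i)))"
proof -
  obtain L0 where "mset L0 = A"
    using ex_mset by blast
  define L where "L = sort_key (angle_at p \<circ> lattice_pt) L0"
  define Q where "Q = map lattice_pt L"
  have "mset L = A"
    using \<open>mset L0 = A\<close> by (simp add: L_def)
  have "sorted (map (angle_at p) Q)"
    unfolding Q_def L_def by (metis map_map sorted_sort_key)
  moreover have "p \<notin> set Q" "m \<ge> 1" "3 * m \<le> length Q"
    using \<open>mset L = A\<close> assms(1-3) by (auto simp: Q_def simp flip: size_mset)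
  moreover note has_halfspace_depth_imp_length_filter[of p L m, folded Q_def]
  ultimately obtain c where c: "\<And>j. c j < m"
    "\<And>t. t < m \<Longrightarrow> p \<in> convex hull ((!) Q ` {j. j < length Q \<and> c j = t})"
    using angular_partition[of p Q m] assms(4) \<open>mset L = A\<close> by blast
  define B where "B i = image_mset ((!) L) (filter_mset (\<lambda>j. c j = i) (mset [0..<length L]))" for i
  have "(\<Sum>i<m. B i) = image_mset ((!) L) (mset [0..<length L])"
    unfolding B_def sum_image_filter_mset_classes by (simp add: c(1))
  also have "\<dots> = A"
    unfolding mset_map[symmetric] map_nth \<open>mset L = A\<close> ..
  moreover have "lattice_pt ` set_mset (B t) = (!) Q ` {j. j < length Q \<and> c j = t}" for t
    by (auto simp: B_def Q_def)
  ultimately show ?thesis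
    using c(2) by (intro exI[of _ B]) simp
qed

end
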